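(* Let $\mathbf{X}$ be a set of discrete random variables with sample space $\Omega(\mathbf{X})$, let $O$ be a positive unital circuit over $\mathbf{X}$, let $\rho$ be a density matrix of matching size, and let $q:\Omega(\mathbf{X})\to[0,1]$. Let $Q(\mathbf{x})=q(\mathbf{x})O(\mathbf{x})$ (a NoisePUnC). Then $\pi_{\mathbf{X}}(\mathbf{x})=\operatorname{Tr}[Q(\mathbf{x})\rho]$ is a sub-complete probability distribution: $\pi_{\mathbf{X}}(\mathbf{x})\ge 0$ for all $\mathbf{x}$ and $\sum_{\mathbf{x}\in\Omega(\mathbf{X})}\pi_{\mathbf{X}}(\mathbf{x})\le1$.
   Context: A density matrix is a PSD complex matrix of trace one; a POVM is a finite family of PSD matrices summing to the identity. A quantum operation from $d\times d$ to $d'\times d'$ matrices is $\Phi(A)=\sum_jK_jAK_j^*$ with $d'\times d$ matrices $K_j$, $\sum_jK_j^*K_j\le\mathbb{1}$ (Loewner order); it is unital if $\Phi(\mathbb{1}_d)=\mathbb{1}_{d'}$. A partition circuit over $\mathbf{X}=\{X_0,\dots,X_{N-1}\}$ is a rooted binary tree whose leaves are in bijection with the variables (leaf $k$ carries $X_k$ with finite sample space $\Omega(X_k)$), each internal unit $k$ having two children $k_l,k_r$; $\mathbf{x}_k$ denotes an assignment to the variables at leaves below $k$. A positive unital circuit assigns to each leaf $k$ a POVM $\{E_{x_k}\}_{x_k\in\Omega(X_k)}$ and to each internal unit $k$ a unital quantum operation $\Phi_k$, computing $O_k(\mathbf{x}_k)=E_{x_k}$ at leaves and $O_k(\mathbf{x}_k)=\Phi_k(O_{k_l}(\mathbf{x}_{k_l})\otimes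 O_{k_r}(\mathbf{x}_{k_r}))$ at internal units ($\otimes$ the Kronecker product); $O(\mathbf{x})=O_{\mathrm{root}}(\mathbf{x})$. A function on a finite set is a sub-complete probability distribution if its values are nonnegative and sum to at most $1$. *)

theory Defs
  imports "Jordan_Normal_Form.Schur_Decomposition"
begin

definition mtrace :: "complex mat \<Rightarrow> complex" where
  "mtrace A = (\<Sum>i<dim_row A. A $$ (i, i))"

definition psd :: "nat \<Rightarrow> complex mat \<Rightarrow> bool" where
  "psd n A \<longleftrightarrow> A \<in> carrier_mat n n \<and>
     (\<forall>v \<in> carrier_vec n. (let z = conjugate v \<bullet> (A *\<^sub>v v) in z \<in> \<real> \<and> 0 \<le> Re z))"

definition loewner_le :: "nat \<Rightarrow> complex mat \<Rightarrow> complex mat \<Rightarrow> bool" where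
  "loewner_le n A B \<longleftrightarrow> A \<in> carrier_mat n n \<and> B \<in> carrier_mat n n \<and> psd n (B - A)"

definition density_matrix :: "nat \<Rightarrow> complex mat \<Rightarrow> bool" where
  "density_matrix n \<rho> \<longleftrightarrow> psd n \<rho> \<and> mtrace \<rho> = 1"

definition msum :: "nat \<Rightarrow> ('i \<Rightarrow> complex mat) \<Rightarrow> 'i set \<Rightarrow> complex mat" where
  "msum n f S = mat n n (\<lambda>(i, j). \<Sum>s\<in>S. f s $$ (i, j))"

definition povm :: "nat \<Rightarrow> 'v set \<Rightarrow> ('v \<Rightarrow> complex mat) \<Rightarrow> bool" where
  "povm n S E \<longleftrightarrow> finite S \<and> (\<forall>v\<in>S. psd n (E v)) \<and> msum n E S = 1\<^sub>m n"

definition kron :: "complex mat \<Rightarrow> complex mat \<Rightarrow> complex mat" where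
  "kron A B = mat (dim_row A * dim_row B) (dim_col A * dim_col B)
     (\<lambda>(i, j). A $$ (i div dim_row B, j div dim_col B) * B $$ (i mod dim_row B, j mod dim_col B))"

definition kraus_apply :: "nat \<Rightarrow> complex mat list \<Rightarrow> complex mat \<Rightarrow> complex mat" where
  "kraus_apply d' Ks A = foldr (\<lambda>K M. K * A * mat_adjoint K + M) Ks (0\<^sub>m d' d')"

definition quantum_operation :: "nat \<Rightarrow> nat \<Rightarrow> complex mat list \<Rightarrow> bool" where
  "quantum_operation d d' Ks \<longleftrightarrow> (\<forall>K \<in> set Ks. K \<in> carrier_mat d' d) \<and>
     loewner_le d (foldr (\<lambda>K M. mat_adjoint K * K + M) Ks (0\<^sub>m d d)) (1\<^sub>m d)"

definition unital_qop :: "nat \<Rightarrow> nat \<Rightarrow> complex mat list \<Rightarrow> bool" where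
  "unital_qop d d' Ks \<longleftrightarrow> quantum_operation d d' Ks \<and> kraus_apply d' Ks (1\<^sub>m d) = 1\<^sub>m d'"

text \<open>A leaf carries a variable index k and a POVM indexed by the values of X_k;
  an internal unit carries its output dimension and the Kraus operators of its quantum operation.\<close>
datatype 'v pcirc = PLeaf nat "'v \<Rightarrow> complex mat" | PNode nat "complex mat list" "'v pcirc" "'v pcirc"

fun leaves :: "'v pcirc \<Rightarrow> nat list" where
  "leaves (PLeaf k E) = [k]"
| "leaves (PNode d' Ks l r) = leaves l @ leaves r"

fun pun_circuit :: "(nat \<Rightarrow> 'v set) \<Rightarrow> nat \<Rightarrow> 'v pcirc \<Rightarrow> bool" where
  "pun_circuit \<Omega> d (PLeaf k E) \<longleftrightarrow> povm d (\<Omega> k) E"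
| "pun_circuit \<Omega> d (PNode d' Ks l r) \<longleftrightarrow> d' = d \<and>
     (\<exists>dl dr. pun_circuit \<Omega> dl l \<and> pun_circuit \<Omega> dr r \<and> unital_qop (dl * dr) d Ks)"

fun circ_eval :: "'v pcirc \<Rightarrow> (nat \<Rightarrow> 'v) \<Rightarrow> complex mat" where
  "circ_eval (PLeaf k E) x = E (x k)"
| "circ_eval (PNode d' Ks l r) x =
     kraus_apply d' Ks (kron (circ_eval l x) (circ_eval r x))"

definition partition_circuit :: "nat \<Rightarrow> 'v pcirc \<Rightarrow> bool" where
  "partition_circuit N c \<longleftrightarrow> distinct (leaves c) \<and> set (leaves c) = {..<N}"

text \<open>Joint sample space \<Omega>(X): assignments on {0..<N}, undefined elsewhere.\<close>
definition joint_space :: "nat \<Rightarrow> (nat \<Rightarrow> 'v set) \<Rightarrow> (nat \<Rightarrow> 'v) set" where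
  "joint_space N \<Omega> = PiE {..<N} \<Omega>"

definition subcomplete_distribution :: "'a set \<Rightarrow> ('a \<Rightarrow> real) \<Rightarrow> bool" where
  "subcomplete_distribution S f \<longleftrightarrow> finite S \<and> (\<forall>x\<in>S. 0 \<le> f x) \<and> sum f S \<le> 1"

end

theory Submission
  imports Defs
begin

(* Every unit of a positive unital circuit turns POVMs into POVMs: the Kronecker products
   E_s \<otimes> F_t of two POVMs form a POVM indexed by pairs (s, t), and a unital quantum
   operation preserves positive semidefiniteness and maps the identity to the identity.
   By induction over the tree, x \<mapsto> O(x) is therefore a POVM on \<Omega>(X), so the values
   Tr[O(x) \<rho>] are nonnegative and sum to Tr \<rho> = 1; scaling by q(x) \<in> [0, 1] keeps them
   nonnegative and can only decrease the sum.
   Positivity of Kronecker products and of K A K^* is shown through Gram representations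
   A_ij = \<Sigma>_k w_k(i) conj(w_k(j)), which every positive semidefinite matrix admits. *)

section \<open>Positive semidefinite kernels and Gram representations\<close>

definition sesq_form ::
    "nat \<Rightarrow> (nat \<Rightarrow> nat \<Rightarrow> complex) \<Rightarrow> (nat \<Rightarrow> complex) \<Rightarrow> (nat \<Rightarrow> complex) \<Rightarrow> complex" where
  "sesq_form n f x y = (\<Sum>a<n. \<Sum>b<n. cnj (x a) * f a b * y b)"

definition delta_fun :: "nat \<Rightarrow> complex \<Rightarrow> nat \<Rightarrow> complex" where
  "delta_fun p t = (\<lambda>b. if b = p then t else 0)"

definition psd_kernel :: "nat \<Rightarrow> (nat \<Rightarrow> nat \<Rightarrow> complex) \<Rightarrow> bool" where
  "psd_kernel n f \<longleftrightarrow> (\<forall>x. sesq_form n f x x \<in> \<real> \<and> 0 \<le> Re (sesq_form n f x x))"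

definition gram_kernel :: "nat \<Rightarrow> (nat \<Rightarrow> nat \<Rightarrow> complex) \<Rightarrow> bool" where
  "gram_kernel n f \<longleftrightarrow> (\<exists>(m::nat) w. \<forall>i<n. \<forall>j<n. f i j = (\<Sum>k<m. w k i * cnj (w k j)))"

lemma sesq_form_cong: "(\<And>a. a < n \<Longrightarrow> x a = y a) \<Longrightarrow> sesq_form n f x x = sesq_form n f y y"
  unfolding sesq_form_def by (intro sum.cong) auto

lemma sesq_form_add:
  "sesq_form n f (\<lambda>a. x a + y a) (\<lambda>a. x a + y a)
     = sesq_form n f x x + sesq_form n f x y + sesq_form n f y x + sesq_form n f y y"
  unfolding sesq_form_def sum.distrib[symmetric] by (intro sum.cong refl) (simp add: algebra_simps)

lemma sesq_form_delta_right:
  "p < n \<Longrightarrow> sesq_form n f x (delta_fun p t) = (\<Sum>a<n. cnj (x a) * f a p) * t"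
  unfolding sesq_form_def delta_fun_def by (simp add: sum_distrib_right if_distrib cong: if_cong)

lemma sesq_form_delta_left:
  "p < n \<Longrightarrow> sesq_form n f (delta_fun p t) y = cnj t * (\<Sum>b<n. f p b * y b)"
proof -
  assume p: "p < n"
  have "sesq_form n f (delta_fun p t) y = (\<Sum>a<n. if a = p then \<Sum>b<n. cnj t * f p b * y b else 0)"
    unfolding sesq_form_def delta_fun_def by (intro sum.cong) auto
  with p show ?thesis by (simp add: sum_distrib_left mult.assoc)
qed

lemma sesq_form_delta_delta:
  "p < n \<Longrightarrow> q < n \<Longrightarrow> sesq_form n f (delta_fun p s) (delta_fun q t) = cnj s * f p q * t"
  using sesq_form_delta_left[of p n f s "delta_fun q t"]
  by (simp add: delta_fun_def if_distrib mult.assoc cong: if_cong)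

lemma psd_kernel_diag:
  assumes "psd_kernel n f" "p < n"
  shows "f p p \<in> \<real>" "0 \<le> Re (f p p)"
  using assms sesq_form_delta_delta[of p n p f 1 1] unfolding psd_kernel_def
  by (metis mult_1 mult_1_right complex_cnj_one)+

lemma psd_kernel_hermitian:
  assumes psd: "psd_kernel n f" and ij: "i < n" "j < n"
  shows "f i j = cnj (f j i)"
proof -
  have form: "sesq_form n f (\<lambda>a. delta_fun i 1 a + delta_fun j t a) (\<lambda>a. delta_fun i 1 a + delta_fun j t a)
        = f i i + f i j * t + cnj t * f j i + cnj t * f j j * t" for t
    by (simp add: sesq_form_add sesq_form_delta_delta ij)
  have real: "Im (f i i + f i j * t + cnj t * f j i + cnj t * f j j * t) = 0" for t
    using psd form[of t] unfolding psd_kernel_def by (metis complex_is_Real_iff)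
  have "Im (f i i) = 0" "Im (f j j) = 0"
    using psd_kernel_diag(1)[OF psd] ij complex_is_Real_iff by blast+
  with real[of 1] real[of \<i>] show ?thesis by (intro complex_eqI) simp_all
qed

(* Otherwise the real part of the form at t e_p + e_q would be a nonconstant real-affine
   function of t. *)
lemma psd_kernel_zero_diag_imp_zero_row:
  assumes psd: "psd_kernel n f" and pq: "p < n" "q < n" and zero: "f p p = 0"
  shows "f p q = 0"
proof (rule ccontr)
  define c where "c = f p q"
  assume "f p q \<noteq> 0"
  then have c_pos: "(cmod c)\<^sup>2 > 0" unfolding c_def by simp
  have "0 \<le> Re (sesq_form n f (\<lambda>a. delta_fun p t a + delta_fun q 1 a)
                              (\<lambda>a. delta_fun p t a + delta_fun q 1 a))" for t
    using psd unfolding psd_kernel_def by blast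
  then have ge: "0 \<le> Re (cnj t * c + cnj c * t + f q q)" for t
    using psd_kernel_hermitian[OF psd pq(2,1)] zero
    by (simp add: sesq_form_add sesq_form_delta_delta pq c_def)
  define R where "R = (\<bar>Re (f q q)\<bar> + 1) / (2 * (cmod c)\<^sup>2)"
  have "Re (cnj (- of_real R * c) * c + cnj c * (- of_real R * c) + f q q)
      = Re (f q q) - 2 * R * (cmod c)\<^sup>2"
    using cmod_power2[of c] by (simp add: power2_eq_square algebra_simps)
  also have "2 * R * (cmod c)\<^sup>2 = \<bar>Re (f q q)\<bar> + 1"
    unfolding R_def using c_pos by simp
  finally show False
    using ge[of "- of_real R * c"] by linarith
qed

(* The Schur complement form at x is the form of f at x + t e_p for the minimising t. *)
lemma psd_kernel_schur_complement:
  assumes psd: "psd_kernel n f" and p: "p < n" "f p p \<noteq> 0"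
  shows "psd_kernel n (\<lambda>i j. f i j - f i p * f p j / f p p)"
  unfolding psd_kernel_def
proof
  fix x
  define z where "z = (\<Sum>b<n. f p b * x b)"
  define t where "t = - z / f p p"
  have "cnj (f p p) = f p p"
    using psd_kernel_diag(1)[OF psd p(1)] Reals_cnj_iff by blast
  then have cnj_t: "cnj t = - cnj z / f p p"
    unfolding t_def by simp
  have column: "(\<Sum>a<n. cnj (x a) * f a p) = cnj z"
    unfolding z_def cnj_sum using psd_kernel_hermitian[OF psd _ p(1)]
    by (auto intro: sum.cong simp: mult.commute)
  have "sesq_form n (\<lambda>i j. f i j - f i p * f p j / f p p) x x
      = sesq_form n f x x - (\<Sum>a<n. cnj (x a) * f a p) * (\<Sum>b<n. f p b * x b) / f p p"
    unfolding sesq_form_def sum_product sum_divide_distrib sum_subtractf[symmetric]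
    by (intro sum.cong refl) (simp add: algebra_simps)
  also have "\<dots> = sesq_form n f (\<lambda>a. x a + delta_fun p t a) (\<lambda>a. x a + delta_fun p t a)"
    unfolding sesq_form_add sesq_form_delta_delta[OF p(1) p(1)]
    unfolding sesq_form_delta_right[OF p(1)] sesq_form_delta_left[OF p(1)] column z_def[symmetric] cnj_t
    using p(2) by (simp add: t_def field_simps)
  finally show "sesq_form n (\<lambda>i j. f i j - f i p * f p j / f p p) x x \<in> \<real>
      \<and> 0 \<le> Re (sesq_form n (\<lambda>i j. f i j - f i p * f p j / f p p) x x)"
    using psd unfolding psd_kernel_def by simp
qed

lemma sum_lessThan_add: "(\<Sum>k<m + (n::nat). h k) = (\<Sum>k<m. h k) + (\<Sum>k<n. h (m + k))"
  by (induction n) (simp_all add: add.assoc)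

lemma gram_kernel_cong:
  "gram_kernel n f \<Longrightarrow> (\<And>i j. i < n \<Longrightarrow> j < n \<Longrightarrow> f i j = g i j) \<Longrightarrow> gram_kernel n g"
  unfolding gram_kernel_def by metis

lemma gram_kernel_rank_one: "gram_kernel n (\<lambda>i j. v i * cnj (v j))"
  unfolding gram_kernel_def by (intro exI[of _ 1] exI[of _ "\<lambda>_. v"]) simp

lemma gram_kernel_add:
  assumes "gram_kernel n f" "gram_kernel n g"
  shows "gram_kernel n (\<lambda>i j. f i j + g i j)"
proof -
  obtain m1 :: nat and w1 where w1: "\<forall>i<n. \<forall>j<n. f i j = (\<Sum>k<m1. w1 k i * cnj (w1 k j))"
    using assms(1) unfolding gram_kernel_def by blast
  obtain m2 :: nat and w2 where w2: "\<forall>i<n. \<forall>j<n. g i j = (\<Sum>k<m2. w2 k i * cnj (w2 k j))"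
    using assms(2) unfolding gram_kernel_def by blast
  define w where "w k = (if k < m1 then w1 k else w2 (k - m1))" for k
  have "(\<Sum>k<m1 + m2. w k i * cnj (w k j)) = f i j + g i j" if "i < n" "j < n" for i j
    using w1 w2 that unfolding w_def sum_lessThan_add by simp
  then show ?thesis
    unfolding gram_kernel_def by (intro exI[of _ "m1 + m2"] exI[of _ w]) simp
qed

(* Induction on the number of nonzero diagonal entries: the Schur complement g at a pivot p
   is again PSD, vanishes at (p, p) and at every zero diagonal entry of f, and f - g is the
   rank-one kernel v v^* with v = f(-, p) / sqrt (f p p). *)
lemma psd_kernel_imp_gram_kernel: "psd_kernel n f \<Longrightarrow> gram_kernel n f"
proof (induction "card {p. p < n \<and> f p p \<noteq> 0}" arbitrary: f rule: less_induct)
  case less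
  note psd = less.prems
  show ?case
  proof (cases "\<exists>p<n. f p p \<noteq> 0")
    case False
    then have "f i j = 0" if "i < n" "j < n" for i j
      using False that psd_kernel_zero_diag_imp_zero_row[OF psd that] by blast
    then show ?thesis
      unfolding gram_kernel_def by (intro exI[of _ "0::nat"]) simp
  next
    case True
    then obtain p where p: "p < n" "f p p \<noteq> 0" by blast
    define g where "g = (\<lambda>i j. f i j - f i p * f p j / f p p)"
    have "g p p = 0"
      unfolding g_def using p(2) by simp
    moreover have "g q q = 0" if "q < n" "f q q = 0" for q
      unfolding g_def using psd_kernel_zero_diag_imp_zero_row[OF psd that(1) p(1) that(2)] that(2)
      by simp
    ultimately have "{q. q < n \<and> g q q \<noteq> 0} \<subset> {q. q < n \<and> f q q \<noteq> 0}"
      using p by blast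
    then have "card {q. q < n \<and> g q q \<noteq> 0} < card {q. q < n \<and> f q q \<noteq> 0}"
      by (intro psubset_card_mono) auto
    moreover have "psd_kernel n g"
      unfolding g_def by (rule psd_kernel_schur_complement[OF psd p])
    ultimately have "gram_kernel n g"
      by (rule less.hyps)
    define r where "r = Re (f p p)"
    have "f p p = of_real r" "r > 0"
      using psd_kernel_diag[OF psd p(1)] p(2) unfolding r_def
      by (auto simp: complex_is_Real_iff complex_eq_iff)
    define v where "v i = f i p / of_real (sqrt r)" for i
    have "f i j = g i j + v i * cnj (v j)" if "i < n" "j < n" for i j
    proof -
      have "v i * cnj (v j) = f i p * cnj (f j p) / of_real r"
        unfolding v_def using \<open>r > 0\<close> by (simp flip: of_real_mult)
      also have "cnj (f j p) = f p j"
        using psd_kernel_hermitian[OF psd p(1) that(2)] by simp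
      finally show ?thesis
        unfolding g_def using \<open>f p p = of_real r\<close> by simp
    qed
    then show ?thesis
      using gram_kernel_cong[OF gram_kernel_add[OF \<open>gram_kernel n g\<close> gram_kernel_rank_one]] by metis
  qed
qed

lemma sesq_form_gram:
  assumes "\<forall>i<n. \<forall>j<n. f i j = (\<Sum>k<m. w k i * cnj (w k j))"
  shows "sesq_form n f x x = of_real (\<Sum>k<m. (cmod (\<Sum>a<n. cnj (x a) * w k a))\<^sup>2)"
proof -
  define z where "z k = (\<Sum>a<n. cnj (x a) * w k a)" for k
  have "sesq_form n f x x = (\<Sum>k<m. z k * cnj (z k))"
    unfolding sesq_form_def z_def using assms
    by (simp add: sum_distrib_left sum_distrib_right sum_product mult_ac sum.swap[of _ "{..<m}"])
  then show ?thesis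
    unfolding z_def by (simp only: of_real_sum complex_norm_square)
qed

lemma gram_kernel_imp_psd_kernel:
  assumes "gram_kernel n f"
  shows "psd_kernel n f"
proof -
  obtain m :: nat and w where w: "\<forall>i<n. \<forall>j<n. f i j = (\<Sum>k<m. w k i * cnj (w k j))"
    using assms unfolding gram_kernel_def by blast
  show ?thesis
    unfolding psd_kernel_def sesq_form_gram[OF w] by (simp add: sum_nonneg)
qed

lemma sum_lessThan_mult_div_mod:
  "(\<Sum>k<m * n. h (k div n) (k mod n)) = (\<Sum>a<m. \<Sum>b<(n::nat). h a b)"
proof (induction m)
  case (Suc m)
  have "(\<Sum>k<Suc m * n. h (k div n) (k mod n))
      = (\<Sum>k<m * n. h (k div n) (k mod n)) + (\<Sum>k<n. h ((m * n + k) div n) ((m * n + k) mod n))"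
    by (simp add: add.commute[of n] sum_lessThan_add)
  also have "(\<Sum>k<n. h ((m * n + k) div n) ((m * n + k) mod n)) = (\<Sum>k<n. h m k)"
    by (intro sum.cong refl) simp
  finally show ?case
    using Suc by simp
qed simp

lemma gram_kernel_tensor:
  assumes "gram_kernel a f" "gram_kernel b g"
  shows "gram_kernel (a * b) (\<lambda>i j. f (i div b) (j div b) * g (i mod b) (j mod b))"
proof -
  obtain m1 :: nat and w where w: "\<forall>i<a. \<forall>j<a. f i j = (\<Sum>k<m1. w k i * cnj (w k j))"
    using assms(1) unfolding gram_kernel_def by blast
  obtain m2 :: nat and u where u: "\<forall>i<b. \<forall>j<b. g i j = (\<Sum>k<m2. u k i * cnj (u k j))"
    using assms(2) unfolding gram_kernel_def by blast
  define W where "W k i = w (k div m2) (i div b) * u (k mod m2) (i mod b)" for k i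
  have "f (i div b) (j div b) * g (i mod b) (j mod b) = (\<Sum>k<m1 * m2. W k i * cnj (W k j))"
    if "i < a * b" "j < a * b" for i j
  proof -
    have "b > 0"
      using that by (cases b) auto
    then have "i div b < a" "j div b < a" "i mod b < b" "j mod b < b"
      using that by (simp_all add: less_mult_imp_div_less)
    then have "f (i div b) (j div b) * g (i mod b) (j mod b)
        = (\<Sum>k1<m1. \<Sum>k2<m2. (w k1 (i div b) * u k2 (i mod b)) * cnj (w k1 (j div b) * u k2 (j mod b)))"
      using w u by (simp add: sum_product mult_ac sum.swap[of _ "{..<m2}"])
    also have "\<dots> = (\<Sum>k<m1 * m2. W k i * cnj (W k j))"
      unfolding W_def by (rule sum_lessThan_mult_div_mod[symmetric])
    finally show ?thesis .
  qed
  then show ?thesis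
    unfolding gram_kernel_def by (intro exI[of _ "m1 * m2"] exI[of _ W]) simp
qed

lemma gram_kernel_sandwich:
  assumes "gram_kernel n f"
  shows "gram_kernel d (\<lambda>i j. \<Sum>b<n. (\<Sum>a<n. k i a * f a b) * cnj (k j b))"
proof -
  obtain m :: nat and w where w: "\<forall>i<n. \<forall>j<n. f i j = (\<Sum>l<m. w l i * cnj (w l j))"
    using assms unfolding gram_kernel_def by blast
  define W where "W l i = (\<Sum>a<n. k i a * w l a)" for l i
  have "(\<Sum>b<n. (\<Sum>a<n. k i a * f a b) * cnj (k j b)) = (\<Sum>l<m. W l i * cnj (W l j))" for i j
  proof -
    have "(\<Sum>b<n. (\<Sum>a<n. k i a * f a b) * cnj (k j b))
        = (\<Sum>b<n. \<Sum>a<n. \<Sum>l<m. k i a * w l a * cnj (w l b) * cnj (k j b))"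
      using w by (simp add: sum_distrib_left sum_distrib_right mult.assoc)
    also have "\<dots> = (\<Sum>l<m. \<Sum>a<n. \<Sum>b<n. k i a * w l a * cnj (w l b) * cnj (k j b))"
      by (subst sum.swap) (subst (2) sum.swap, subst sum.swap, rule refl)
    also have "\<dots> = (\<Sum>l<m. W l i * cnj (W l j))"
      unfolding W_def cnj_sum sum_product by (intro sum.cong refl) (simp add: mult_ac)
    finally show ?thesis .
  qed
  then show ?thesis
    unfolding gram_kernel_def by (intro exI[of _ m] exI[of _ W]) simp
qed

section \<open>Positive semidefinite matrices\<close>

lemma conjugate_scalar_prod_mult_mat_vec:
  assumes "A \<in> carrier_mat n n" "v \<in> carrier_vec n"
  shows "conjugate v \<bullet> (A *\<^sub>v v) = sesq_form n (\<lambda>i j. A $$ (i, j)) (($) v) (($) v)"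
  using assms unfolding sesq_form_def
  by (simp add: scalar_prod_def atLeast0LessThan sum_distrib_left mult.assoc)

lemma psd_iff_psd_kernel: "psd n A \<longleftrightarrow> A \<in> carrier_mat n n \<and> psd_kernel n (\<lambda>i j. A $$ (i, j))"
proof (cases "A \<in> carrier_mat n n")
  case True
  have "sesq_form n (\<lambda>i j. A $$ (i, j)) x x = conjugate (vec n x) \<bullet> (A *\<^sub>v vec n x)" for x
    using conjugate_scalar_prod_mult_mat_vec[OF True, of "vec n x"] sesq_form_cong[of n "($) (vec n x)" x]
    by simp
  then show ?thesis
    using True conjugate_scalar_prod_mult_mat_vec[OF True] unfolding psd_def psd_kernel_def Let_def
    by (metis vec_carrier)
qed (simp add: psd_def)

lemma psd_iff_gram_kernel: "psd n A \<longleftrightarrow> A \<in> carrier_mat n n \<and> gram_kernel n (\<lambda>i j. A $$ (i, j))"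
  using psd_iff_psd_kernel psd_kernel_imp_gram_kernel gram_kernel_imp_psd_kernel by blast

lemma index_mult_mat_sum:
  "A \<in> carrier_mat n m \<Longrightarrow> B \<in> carrier_mat m k \<Longrightarrow> i < n \<Longrightarrow> j < k \<Longrightarrow>
    (A * B) $$ (i, j) = (\<Sum>a<m. A $$ (i, a) * B $$ (a, j))"
  by (simp add: scalar_prod_def atLeast0LessThan)

lemma dim_mat_adjoint [simp]:
  "dim_row (mat_adjoint K) = dim_col K" "dim_col (mat_adjoint K) = dim_row K"
  unfolding mat_adjoint_def by (simp_all add: mat_of_rows_def)

lemma index_mat_adjoint [simp]:
  "i < dim_col K \<Longrightarrow> j < dim_row K \<Longrightarrow> mat_adjoint K $$ (i, j) = cnj (K $$ (j, i))"
  unfolding mat_adjoint_def by (simp add: mat_of_rows_def)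

lemma mat_adjoint_carrier: "K \<in> carrier_mat d n \<Longrightarrow> mat_adjoint K \<in> carrier_mat n d"
  by (rule carrier_matI) simp_all

lemma sandwich_carrier:
  "K \<in> carrier_mat d n \<Longrightarrow> A \<in> carrier_mat n n \<Longrightarrow> K * A * mat_adjoint K \<in> carrier_mat d d"
  using mat_adjoint_carrier by (metis mult_carrier_mat)

lemma index_sandwich:
  assumes K: "K \<in> carrier_mat d n" and A: "A \<in> carrier_mat n n" and ij: "i < d" "j < d"
  shows "(K * A * mat_adjoint K) $$ (i, j)
    = (\<Sum>b<n. (\<Sum>a<n. K $$ (i, a) * A $$ (a, b)) * cnj (K $$ (j, b)))"
proof -
  have "(K * A * mat_adjoint K) $$ (i, j) = (\<Sum>b<n. (K * A) $$ (i, b) * mat_adjoint K $$ (b, j))"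
    by (rule index_mult_mat_sum[OF mult_carrier_mat[OF K A] mat_adjoint_carrier[OF K] ij])
  also have "\<dots> = (\<Sum>b<n. (\<Sum>a<n. K $$ (i, a) * A $$ (a, b)) * cnj (K $$ (j, b)))"
    using K ij by (intro sum.cong refl) (simp add: index_mult_mat_sum[OF K A] del: index_mult_mat)
  finally show ?thesis .
qed

lemma psd_add:
  assumes "psd n A" "psd n B"
  shows "psd n (A + B)"
proof -
  have carrier: "A \<in> carrier_mat n n" "B \<in> carrier_mat n n"
    and "gram_kernel n (\<lambda>i j. A $$ (i, j))" "gram_kernel n (\<lambda>i j. B $$ (i, j))"
    using assms unfolding psd_iff_gram_kernel by auto
  then have "gram_kernel n (\<lambda>i j. A $$ (i, j) + B $$ (i, j))"
    by (intro gram_kernel_add)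
  then have "gram_kernel n (\<lambda>i j. (A + B) $$ (i, j))"
    by (rule gram_kernel_cong) (use carrier in simp)
  then show ?thesis
    unfolding psd_iff_gram_kernel using carrier by simp
qed

lemma psd_sandwich:
  assumes K: "K \<in> carrier_mat d n" and A: "psd n A"
  shows "psd d (K * A * mat_adjoint K)"
proof -
  have carrier: "A \<in> carrier_mat n n" and "gram_kernel n (\<lambda>i j. A $$ (i, j))"
    using A unfolding psd_iff_gram_kernel by auto
  then have "gram_kernel d (\<lambda>i j. \<Sum>b<n. (\<Sum>a<n. K $$ (i, a) * A $$ (a, b)) * cnj (K $$ (j, b)))"
    by (intro gram_kernel_sandwich)
  then have "gram_kernel d (\<lambda>i j. (K * A * mat_adjoint K) $$ (i, j))"
    by (rule gram_kernel_cong) (simp add: index_sandwich[OF K carrier])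
  then show ?thesis
    unfolding psd_iff_gram_kernel using sandwich_carrier[OF K carrier] by simp
qed

lemma dim_kron [simp]:
  "dim_row (kron A B) = dim_row A * dim_row B" "dim_col (kron A B) = dim_col A * dim_col B"
  unfolding kron_def by simp_all

lemma kron_carrier: "A \<in> carrier_mat a a \<Longrightarrow> B \<in> carrier_mat b b \<Longrightarrow> kron A B \<in> carrier_mat (a * b) (a * b)"
  by (rule carrier_matI) simp_all

lemma index_kron:
  "A \<in> carrier_mat a a \<Longrightarrow> B \<in> carrier_mat b b \<Longrightarrow> i < a * b \<Longrightarrow> j < a * b \<Longrightarrow>
    kron A B $$ (i, j) = A $$ (i div b, j div b) * B $$ (i mod b, j mod b)"
  unfolding kron_def by simp

lemma psd_kron:
  assumes "psd a A" "psd b B"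
  shows "psd (a * b) (kron A B)"
proof -
  have carrier: "A \<in> carrier_mat a a" "B \<in> carrier_mat b b"
    and "gram_kernel a (\<lambda>i j. A $$ (i, j))" "gram_kernel b (\<lambda>i j. B $$ (i, j))"
    using assms unfolding psd_iff_gram_kernel by auto
  then have "gram_kernel (a * b) (\<lambda>i j. A $$ (i div b, j div b) * B $$ (i mod b, j mod b))"
    by (intro gram_kernel_tensor)
  then have "gram_kernel (a * b) (\<lambda>i j. kron A B $$ (i, j))"
    by (rule gram_kernel_cong) (simp add: index_kron[OF carrier])
  then show ?thesis
    unfolding psd_iff_gram_kernel using kron_carrier[OF carrier] by simp
qed

lemma kraus_apply_Nil [simp]: "kraus_apply d [] A = 0\<^sub>m d d"
  unfolding kraus_apply_def by simp

lemma kraus_apply_Cons [simp]: "kraus_apply d (K # Ks) A = K * A * mat_adjoint K + kraus_apply d Ks A"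
  unfolding kraus_apply_def by simp

lemma kraus_apply_carrier:
  "\<forall>K\<in>set Ks. K \<in> carrier_mat d n \<Longrightarrow> A \<in> carrier_mat n n \<Longrightarrow> kraus_apply d Ks A \<in> carrier_mat d d"
  by (induction Ks) (auto simp: sandwich_carrier)

lemma psd_zero_mat: "psd n (0\<^sub>m n n)"
  unfolding psd_iff_gram_kernel gram_kernel_def by (intro conjI zero_carrier_mat exI[of _ "0::nat"]) simp

lemma psd_kraus_apply:
  "\<forall>K\<in>set Ks. K \<in> carrier_mat d n \<Longrightarrow> psd n A \<Longrightarrow> psd d (kraus_apply d Ks A)"
  by (induction Ks) (auto simp: psd_zero_mat psd_add psd_sandwich)

section \<open>Sums and traces of matrix families\<close>

lemma msum_carrier [simp]: "msum n f S \<in> carrier_mat n n"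
  unfolding msum_def by simp

lemma dim_msum [simp]: "dim_row (msum n f S) = n" "dim_col (msum n f S) = n"
  unfolding msum_def by simp_all

lemma index_msum: "i < n \<Longrightarrow> j < n \<Longrightarrow> msum n f S $$ (i, j) = (\<Sum>s\<in>S. f s $$ (i, j))"
  unfolding msum_def by simp

lemma msum_reindex_bij_betw:
  assumes "bij_betw h A B"
  shows "msum n (\<lambda>x. f (h x)) A = msum n f B"
proof (rule eq_matI)
  fix i j assume "i < dim_row (msum n f B)" "j < dim_col (msum n f B)"
  then show "msum n (\<lambda>x. f (h x)) A $$ (i, j) = msum n f B $$ (i, j)"
    using sum.reindex_bij_betw[OF assms, of "\<lambda>s. f s $$ (i, j)"] by (simp add: index_msum)
qed simp_all

lemma msum_add:
  assumes "\<And>s. s \<in> S \<Longrightarrow> g s \<in> carrier_mat n n"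
  shows "msum n f S + msum n g S = msum n (\<lambda>s. f s + g s) S"
proof (rule eq_matI)
  fix i j assume "i < dim_row (msum n (\<lambda>s. f s + g s) S)" "j < dim_col (msum n (\<lambda>s. f s + g s) S)"
  then have ij: "i < n" "j < n" by simp_all
  have "(f s + g s) $$ (i, j) = f s $$ (i, j) + g s $$ (i, j)" if "s \<in> S" for s
    using assms[OF that] ij by simp
  then show "(msum n f S + msum n g S) $$ (i, j) = msum n (\<lambda>s. f s + g s) S $$ (i, j)"
    using ij by (simp add: index_msum sum.distrib)
qed simp_all

lemma sandwich_msum:
  assumes K: "K \<in> carrier_mat d n" and f: "\<And>s. s \<in> S \<Longrightarrow> f s \<in> carrier_mat n n"
  shows "K * msum n f S * mat_adjoint K = msum d (\<lambda>s. K * f s * mat_adjoint K) S"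
proof (rule eq_matI)
  fix i j assume "i < dim_row (msum d (\<lambda>s. K * f s * mat_adjoint K) S)"
    "j < dim_col (msum d (\<lambda>s. K * f s * mat_adjoint K) S)"
  then have ij: "i < d" "j < d" by simp_all
  have "(K * msum n f S * mat_adjoint K) $$ (i, j)
      = (\<Sum>b<n. \<Sum>a<n. \<Sum>s\<in>S. K $$ (i, a) * f s $$ (a, b) * cnj (K $$ (j, b)))"
    by (simp add: index_sandwich[OF K msum_carrier ij] index_msum sum_distrib_left sum_distrib_right)
  also have "\<dots> = (\<Sum>s\<in>S. \<Sum>b<n. \<Sum>a<n. K $$ (i, a) * f s $$ (a, b) * cnj (K $$ (j, b)))"
    by (subst sum.swap) (subst (2) sum.swap, rule refl)
  also have "\<dots> = msum d (\<lambda>s. K * f s * mat_adjoint K) S $$ (i, j)"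
    by (simp add: index_msum ij index_sandwich[OF K f ij] sum_distrib_right)
  finally show "(K * msum n f S * mat_adjoint K) $$ (i, j)
      = msum d (\<lambda>s. K * f s * mat_adjoint K) S $$ (i, j)" .
qed (use K in simp_all)

lemma kraus_apply_msum:
  assumes Ks: "\<forall>K\<in>set Ks. K \<in> carrier_mat d n" and f: "\<And>s. s \<in> S \<Longrightarrow> f s \<in> carrier_mat n n"
  shows "kraus_apply d Ks (msum n f S) = msum d (\<lambda>s. kraus_apply d Ks (f s)) S"
  using Ks
proof (induction Ks)
  case Nil
  show ?case by (rule eq_matI) (simp_all add: index_msum)
next
  case (Cons K Ks)
  then have K: "K \<in> carrier_mat d n" and Ks: "\<forall>K\<in>set Ks. K \<in> carrier_mat d n" by auto
  have "kraus_apply d (K # Ks) (msum n f S)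
      = msum d (\<lambda>s. K * f s * mat_adjoint K) S + msum d (\<lambda>s. kraus_apply d Ks (f s)) S"
    using Cons.IH[OF Ks] sandwich_msum[of K d n S f, OF K f] by simp
  also have "\<dots> = msum d (\<lambda>s. kraus_apply d (K # Ks) (f s)) S"
    using kraus_apply_carrier[OF Ks f] by (simp add: msum_add)
  finally show ?case .
qed

lemma kron_msum:
  assumes f: "\<And>s. s \<in> S \<Longrightarrow> f s \<in> carrier_mat a a" and g: "\<And>t. t \<in> T \<Longrightarrow> g t \<in> carrier_mat b b"
  shows "kron (msum a f S) (msum b g T) = msum (a * b) (\<lambda>(s, t). kron (f s) (g t)) (S \<times> T)"
proof (rule eq_matI)
  fix i j assume "i < dim_row (msum (a * b) (\<lambda>(s, t). kron (f s) (g t)) (S \<times> T))"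
    "j < dim_col (msum (a * b) (\<lambda>(s, t). kron (f s) (g t)) (S \<times> T))"
  then have ij: "i < a * b" "j < a * b" by simp_all
  then have "b > 0" by (cases b) auto
  then have "i div b < a" "j div b < a" "i mod b < b" "j mod b < b"
    using ij by (simp_all add: less_mult_imp_div_less)
  then have "kron (msum a f S) (msum b g T) $$ (i, j)
      = (\<Sum>(s, t)\<in>S \<times> T. f s $$ (i div b, j div b) * g t $$ (i mod b, j mod b))"
    by (simp add: index_kron[OF msum_carrier msum_carrier ij] index_msum sum_product
        sum.cartesian_product)
  also have "\<dots> = msum (a * b) (\<lambda>(s, t). kron (f s) (g t)) (S \<times> T) $$ (i, j)"
    unfolding index_msum[OF ij] using f g by (intro sum.cong refl) (auto simp: index_kron[OF _ _ ij])
  finally show "kron (msum a f S) (msum b g T) $$ (i, j)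
      = msum (a * b) (\<lambda>(s, t). kron (f s) (g t)) (S \<times> T) $$ (i, j)" .
qed simp_all

lemma kron_one_mat: "kron (1\<^sub>m a) (1\<^sub>m b) = 1\<^sub>m (a * b)"
proof (rule eq_matI)
  fix i j assume "i < dim_row (1\<^sub>m (a * b))" "j < dim_col (1\<^sub>m (a * b))"
  then have ij: "i < a * b" "j < a * b" by simp_all
  then have "b > 0" by (cases b) auto
  then have "i div b < a" "j div b < a" "i mod b < b" "j mod b < b"
    using ij by (simp_all add: less_mult_imp_div_less)
  moreover have "i div b = j div b \<and> i mod b = j mod b \<longleftrightarrow> i = j"
    by (metis div_mult_mod_eq)
  ultimately show "kron (1\<^sub>m a) (1\<^sub>m b) $$ (i, j) = 1\<^sub>m (a * b) $$ (i, j)"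
    using ij by (auto simp: index_kron[OF one_carrier_mat one_carrier_mat ij])
qed simp_all

lemma mtrace_mult:
  "A \<in> carrier_mat n n \<Longrightarrow> B \<in> carrier_mat n n \<Longrightarrow> mtrace (A * B) = (\<Sum>i<n. \<Sum>a<n. A $$ (i, a) * B $$ (a, i))"
  unfolding mtrace_def by (simp add: index_mult_mat_sum del: index_mult_mat(1))

lemma mtrace_smult: "A \<in> carrier_mat n n \<Longrightarrow> mtrace (c \<cdot>\<^sub>m A) = c * mtrace A"
  unfolding mtrace_def by (simp add: sum_distrib_left)

lemma mtrace_msum_mult:
  assumes f: "\<And>s. s \<in> S \<Longrightarrow> f s \<in> carrier_mat n n" and B: "B \<in> carrier_mat n n"
  shows "mtrace (msum n f S * B) = (\<Sum>s\<in>S. mtrace (f s * B))"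
  using f unfolding mtrace_mult[OF msum_carrier B]
  by (simp add: mtrace_mult[OF _ B] index_msum sum_distrib_right sum.swap[of _ S])

lemma mtrace_mult_psd_nonneg:
  assumes A: "psd n A" and B: "psd n B"
  shows "mtrace (A * B) \<in> \<real> \<and> 0 \<le> Re (mtrace (A * B))"
proof -
  obtain m :: nat and w where w: "\<forall>i<n. \<forall>j<n. A $$ (i, j) = (\<Sum>k<m. w k i * cnj (w k j))"
    using A unfolding psd_iff_gram_kernel gram_kernel_def by blast
  have carrier: "A \<in> carrier_mat n n" "B \<in> carrier_mat n n"
    and kernel: "psd_kernel n (\<lambda>i j. B $$ (i, j))"
    using A B unfolding psd_iff_psd_kernel by auto
  have "mtrace (A * B) = (\<Sum>k<m. \<Sum>i<n. \<Sum>a<n. w k i * cnj (w k a) * B $$ (a, i))"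
    unfolding mtrace_mult[OF carrier] using w
    by (simp add: sum_distrib_right sum.swap[of _ "{..<m}"])
  also have "\<dots> = (\<Sum>k<m. sesq_form n (\<lambda>i j. B $$ (i, j)) (w k) (w k))"
    unfolding sesq_form_def by (subst (2) sum.swap) (simp add: mult_ac)
  finally show ?thesis
    using kernel unfolding psd_kernel_def by (auto intro!: sum_nonneg simp: Re_sum)
qed

section \<open>Circuit outputs form a POVM\<close>

lemma povm_reindex:
  assumes "bij_betw h A B" "povm n B E"
  shows "povm n A (\<lambda>x. E (h x))"
  using assms bij_betw_finite bij_betwE msum_reindex_bij_betw[OF assms(1)]
  unfolding povm_def by metis

lemma povm_kraus_kron:
  assumes E: "povm a S E" and F: "povm b T F" and Ks: "unital_qop (a * b) d Ks"
  shows "povm d (S \<times> T) (\<lambda>(s, t). kraus_apply d Ks (kron (E s) (F t)))"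
proof -
  have Ks_carrier: "\<forall>K\<in>set Ks. K \<in> carrier_mat d (a * b)"
    and unital: "kraus_apply d Ks (1\<^sub>m (a * b)) = 1\<^sub>m d"
    using Ks unfolding unital_qop_def quantum_operation_def by auto
  have psd_E: "\<And>s. s \<in> S \<Longrightarrow> psd a (E s)" and psd_F: "\<And>t. t \<in> T \<Longrightarrow> psd b (F t)"
    using E F unfolding povm_def by auto
  then have E_carrier: "\<And>s. s \<in> S \<Longrightarrow> E s \<in> carrier_mat a a"
    and F_carrier: "\<And>t. t \<in> T \<Longrightarrow> F t \<in> carrier_mat b b"
    unfolding psd_def by auto
  have "msum d (\<lambda>(s, t). kraus_apply d Ks (kron (E s) (F t))) (S \<times> T)
      = kraus_apply d Ks (msum (a * b) (\<lambda>(s, t). kron (E s) (F t)) (S \<times> T))"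
    using kraus_apply_msum[OF Ks_carrier, of "S \<times> T" "\<lambda>(s, t). kron (E s) (F t)"]
      E_carrier F_carrier kron_carrier by (force simp: case_prod_unfold)
  also have "msum (a * b) (\<lambda>(s, t). kron (E s) (F t)) (S \<times> T) = kron (msum a E S) (msum b F T)"
    by (rule kron_msum[symmetric]) (use E_carrier F_carrier in auto)
  also have "\<dots> = 1\<^sub>m (a * b)"
    using E F unfolding povm_def by (simp add: kron_one_mat)
  finally show ?thesis
    using E F psd_E psd_F unital unfolding povm_def
    by (auto intro!: psd_kraus_apply[OF Ks_carrier] psd_kron)
qed

lemma circ_eval_cong: "(\<And>k. k \<in> set (leaves c) \<Longrightarrow> x k = y k) \<Longrightarrow> circ_eval c x = circ_eval c y"
  by (induction c) auto

lemma bij_betw_apply_PiE_singleton: "bij_betw (\<lambda>x. x k) (PiE {k} \<Omega>) (\<Omega> k)"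
  by (rule bij_betw_byWitness[where f' = "\<lambda>v. (\<lambda>m\<in>{k}. v)"])
    (auto simp: PiE_iff extensional_def split: if_split_asm)

lemma bij_betw_restrict_pair_PiE:
  assumes "L \<inter> R = {}"
  shows "bij_betw (\<lambda>x. (restrict x L, restrict x R)) (PiE (L \<union> R) \<Omega>) (PiE L \<Omega> \<times> PiE R \<Omega>)"
  by (rule bij_betw_byWitness[where f' = "\<lambda>(a, b) k. if k \<in> L then a k else b k"])
    (use assms in \<open>auto simp: PiE_iff extensional_def fun_eq_iff\<close>)

lemma pun_circuit_povm:
  "pun_circuit \<Omega> d c \<Longrightarrow> distinct (leaves c) \<Longrightarrow> povm d (PiE (set (leaves c)) \<Omega>) (circ_eval c)"
proof (induction c arbitrary: d)
  case (PLeaf k E)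
  then have "povm d (PiE {k} \<Omega>) (\<lambda>x. E (x k))"
    by (intro povm_reindex[OF bij_betw_apply_PiE_singleton]) simp
  moreover have "circ_eval (PLeaf k E) = (\<lambda>x. E (x k))"
    by (rule ext) simp
  ultimately show ?case by simp
next
  case (PNode d' Ks l r)
  define L where "L = set (leaves l)"
  define R where "R = set (leaves r)"
  from PNode.prems(1) obtain dl dr where "d' = d" "pun_circuit \<Omega> dl l" "pun_circuit \<Omega> dr r"
    and Ks: "unital_qop (dl * dr) d Ks" by auto
  moreover have "distinct (leaves l)" "distinct (leaves r)" and disjoint: "L \<inter> R = {}"
    using PNode.prems(2) unfolding L_def R_def by auto
  ultimately have "povm dl (PiE L \<Omega>) (circ_eval l)" "povm dr (PiE R \<Omega>) (circ_eval r)"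
    using PNode.IH unfolding L_def R_def by auto
  then have "povm d (PiE (L \<union> R) \<Omega>)
      (\<lambda>x. kraus_apply d Ks (kron (circ_eval l (restrict x L)) (circ_eval r (restrict x R))))"
    using povm_reindex[OF bij_betw_restrict_pair_PiE[OF disjoint] povm_kraus_kron[OF _ _ Ks]] by simp
  moreover have "circ_eval l (restrict x L) = circ_eval l x" "circ_eval r (restrict x R) = circ_eval r x"
    for x
    unfolding L_def R_def by (auto intro: circ_eval_cong)
  ultimately show ?case
    using \<open>d' = d\<close> unfolding L_def R_def by simp
qed

lemma povm_noisy_trace_subcomplete:
  assumes E: "povm d S E" and \<rho>: "density_matrix d \<rho>" and q: "\<forall>x\<in>S. 0 \<le> q x \<and> q x \<le> 1"
  shows "(\<forall>x\<in>S. mtrace (complex_of_real (q x) \<cdot>\<^sub>m E x * \<rho>) \<in> \<real>)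
    \<and> subcomplete_distribution S (\<lambda>x. Re (mtrace (complex_of_real (q x) \<cdot>\<^sub>m E x * \<rho>)))"
proof -
  have "finite S" and psd_E: "\<And>x. x \<in> S \<Longrightarrow> psd d (E x)" and sum_E: "msum d E S = 1\<^sub>m d"
    using E unfolding povm_def by auto
  have psd_\<rho>: "psd d \<rho>" and trace_\<rho>: "mtrace \<rho> = 1"
    using \<rho> unfolding density_matrix_def by auto
  have E_carrier: "\<And>x. x \<in> S \<Longrightarrow> E x \<in> carrier_mat d d" and \<rho>_carrier: "\<rho> \<in> carrier_mat d d"
    using psd_E psd_\<rho> unfolding psd_def by auto
  define t where "t x = Re (mtrace (E x * \<rho>))" for x
  have trace: "mtrace (E x * \<rho>) = of_real (t x)" and t_nonneg: "0 \<le> t x" if "x \<in> S" for x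
    using mtrace_mult_psd_nonneg[OF psd_E[OF that] psd_\<rho>] unfolding t_def
    by (auto simp: complex_is_Real_iff complex_eq_iff)
  have scaled: "mtrace (complex_of_real (q x) \<cdot>\<^sub>m E x * \<rho>) = of_real (q x * t x)" if "x \<in> S" for x
    using E_carrier[OF that] \<rho>_carrier trace[OF that]
    by (simp add: mult_smult_assoc_mat mtrace_smult[of _ d])
  have "of_real (\<Sum>x\<in>S. t x) = (\<Sum>x\<in>S. mtrace (E x * \<rho>))"
    using trace by simp
  also have "\<dots> = mtrace (msum d E S * \<rho>)"
    by (rule mtrace_msum_mult[OF E_carrier \<rho>_carrier, symmetric])
  also have "\<dots> = 1"
    using \<rho>_carrier trace_\<rho> sum_E by simp
  finally have "(\<Sum>x\<in>S. t x) = 1"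
    by (metis of_real_eq_1_iff)
  moreover have "(\<Sum>x\<in>S. q x * t x) \<le> (\<Sum>x\<in>S. t x)"
    using q t_nonneg by (intro sum_mono) (simp add: mult_left_le_one_le)
  ultimately show ?thesis
    using \<open>finite S\<close> q t_nonneg scaled unfolding subcomplete_distribution_def by simp
qed

theorem proposition16:
  fixes N :: nat and \<Omega> :: "nat \<Rightarrow> 'v set" and C :: "'v pcirc" and d :: nat
    and \<rho> :: "complex mat" and q :: "(nat \<Rightarrow> 'v) \<Rightarrow> real"
  assumes "partition_circuit N C"
    and "pun_circuit \<Omega> d C"
    and "density_matrix d \<rho>"
    and "\<forall>x \<in> joint_space N \<Omega>. 0 \<le> q x \<and> q x \<le> 1"
  shows "(\<forall>x \<in> joint_space N \<Omega>. mtrace (complex_of_real (q x) \<cdot>\<^sub>m circ_eval C x * \<rho>) \<in> \<real>)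
    \<and> subcomplete_distribution (joint_space N \<Omega>)
        (\<lambda>x. Re (mtrace (complex_of_real (q x) \<cdot>\<^sub>m circ_eval C x * \<rho>)))"
proof -
  have "joint_space N \<Omega> = PiE (set (leaves C)) \<Omega>" and "distinct (leaves C)"
    using assms(1) unfolding partition_circuit_def joint_space_def by simp_all
  then have "povm d (joint_space N \<Omega>) (circ_eval C)"
    using pun_circuit_povm[OF assms(2)] by simp
  then show ?thesis
    using povm_noisy_trace_subcomplete assms(3,4) by blast
qed

end
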